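(* For $\chi\in\mathcal{A}$ let $R_i^\chi$ ($i=1,2,3$) be the $\mathcal{S}^*_{car}$-radius of $\mathcal{F}_i^\chi$. Then: (a) $\chi(z)=z$: $R_1^\chi=1/(4+\sqrt{17})$, $R_2^\chi=1/(3+2\sqrt3)$, $R_3^\chi=1/(2+\sqrt5)$. (b) $\chi(z)=z/(1+z)$: $R_1^\chi=5-2\sqrt6$, $R_2^\chi=\sqrt{17}-4$, $R_3^\chi=3-2\sqrt2$. (c) $\chi(z)=z/(1-z^2)$: $R_1^\chi=r_1$, $R_2^\chi=r_2$, $R_3^\chi=r_3$, where $r_1,r_2,r_3$ are the smallest positive real roots in $(0,1)$ of $3r^4-8r^3-4r^2-8r+1=0$, $r^4-6r^3-6r^2-6r+1=0$ and $3r^4-4r^3-4r^2-4r+1=0$ respectively ($r_1\approx0.11667$, $r_2\approx0.14326$, $r_3\approx0.20213$). (d) $\chi(z)=z/(1-z)^2$: $R_1^\chi=(6-\sqrt{33})/3$, $R_2^\chi=5-2\sqrt6$, $R_3^\chi=(4-\sqrt{13})/3$. (e) $\chi(z)=z+z^2/2$: $R_1^\chi=s_1$, $R_2^\chi=s_2$, $R_3^\chi=s_3$, where $s_1,s_2,s_3$ are the smallest positive real roots in $(0,1)$ of $3r^3+6r^2-19r+2=0$, $5r^3-15r+2=0$ and $3r^3+2r^2-11r+2=0$ respectively ($s_1\approx0.10924$, $s_2\approx0.13414$, $s_3\approx0.19028$). All estimates are sharp.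
   Context: $\mathbb{D}=\{z:|z|<1\}$; $\mathcal{A}$ is the class of analytic $f$ on $\mathbb{D}$ with $f(0)=0$, $f'(0)=1$. $F\prec G$ means $F=G\circ w$ for an analytic $w:\mathbb{D}\to\mathbb{D}$ with $w(0)=0$. $\mathcal{S}^*_{car}$ is the class of $f\in\mathcal{A}$ with $zf'(z)/f(z)\prec 1+z+z^2/2$. For $\chi\in\mathcal{A}$: $\mathcal{F}_1^\chi$ is the class of $f\in\mathcal{A}$ such that $\operatorname{Re}(f(z)/g(z))>0$ on $\mathbb{D}$ for some $g\in\mathcal{A}$ with $\operatorname{Re}(g(z)/\chi(z))>0$ on $\mathbb{D}$; $\mathcal{F}_2^\chi$ is the class of $f\in\mathcal{A}$ such that $|f(z)/g(z)-1|<1$ on $\mathbb{D}$ for some $g\in\mathcal{A}$ with $\operatorname{Re}(g(z)/\chi(z))>0$ on $\mathbb{D}$; $\mathcal{F}_3^\chi$ is the class of $f\in\mathcal{A}$ with $\operatorname{Re}(f(z)/\chi(z))>0$ on $\mathbb{D}$. For a class $\mathcal{F}\subseteq\mathcal{A}$, the $\mathcal{S}^*_{car}$-radius of $\mathcal{F}$ is the supremum of all $r\in(0,1]$ such that $f(rz)/r\in\mathcal{S}^*_{car}$ for every $f\in\mathcal{F}$. *)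

theory Defs
  imports "HOL-Analysis.Analysis"
begin

definition classA :: "(complex \<Rightarrow> complex) set" where
  "classA = {f. f holomorphic_on ball 0 1 \<and> f 0 = 0 \<and> deriv f 0 = 1}"

definition subord :: "(complex \<Rightarrow> complex) \<Rightarrow> (complex \<Rightarrow> complex) \<Rightarrow> bool" where
  "subord F G \<longleftrightarrow> (\<exists>w. w holomorphic_on ball 0 1 \<and> w ` ball 0 1 \<subseteq> ball 0 1 \<and> w 0 = 0
      \<and> (\<forall>z\<in>ball 0 1. F z = G (w z)))"

definition logderiv_quot :: "(complex \<Rightarrow> complex) \<Rightarrow> complex \<Rightarrow> complex" where
  "logderiv_quot f z = (if z = 0 then 1 else z * deriv f z / f z)"

definition SstarCar :: "(complex \<Rightarrow> complex) set" where
  "SstarCar = {f. f \<in> classA \<and> (\<forall>z\<in>ball 0 1. z \<noteq> 0 \<longrightarrow> f z \<noteq> 0)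
      \<and> subord (logderiv_quot f) (\<lambda>z. 1 + z + z^2/2)}"

text \<open>Quotient conditions are imposed on the punctured disc; at z = 0 the
  quotients have the removable value 1, which satisfies them automatically.\<close>
definition F3 :: "(complex \<Rightarrow> complex) \<Rightarrow> (complex \<Rightarrow> complex) set" where
  "F3 chi = {f. f \<in> classA \<and> (\<forall>z\<in>ball 0 1. z \<noteq> 0 \<longrightarrow> Re (f z / chi z) > 0)}"

definition F1 :: "(complex \<Rightarrow> complex) \<Rightarrow> (complex \<Rightarrow> complex) set" where
  "F1 chi = {f. f \<in> classA \<and> (\<exists>g\<in>F3 chi. \<forall>z\<in>ball 0 1. z \<noteq> 0 \<longrightarrow> Re (f z / g z) > 0)}"

definition F2 :: "(complex \<Rightarrow> complex) \<Rightarrow> (complex \<Rightarrow> complex) set" where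
  "F2 chi = {f. f \<in> classA \<and> (\<exists>g\<in>F3 chi. \<forall>z\<in>ball 0 1. z \<noteq> 0 \<longrightarrow> cmod (f z / g z - 1) < 1)}"

definition car_radius :: "(complex \<Rightarrow> complex) set \<Rightarrow> real" where
  "car_radius F = Sup {r. 0 < r \<and> r \<le> 1 \<and>
      (\<forall>f\<in>F. (\<lambda>z. f (complex_of_real r * z) / complex_of_real r) \<in> SstarCar)}"

end

theory Submission
  imports Defs "HOL-Complex_Analysis.Complex_Analysis"
begin

text \<open>For each of the five kernels, \<open>\<chi>(z)/z\<close> has no zeros, and \<open>f\<close> lies in the three classes iff
  \<open>f = \<chi> q p\<close> with \<open>q\<close> Caratheodory (\<open>Re q > 0\<close>, \<open>q(0) = 1\<close>) and \<open>p\<close> Caratheodory, \<open>|p - 1| < 1\<close>,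
  or \<open>p = 1\<close>, respectively; so \<open>zf'/f = z\<chi>'/\<chi> + zq'/q + zp'/p\<close>.  By Schwarz-Pick, on \<open>|z| = t\<close>
  \<open>|zq'/q| \<le> 2t/(1 - t\<^sup>2)\<close> and \<open>|zp'/p| \<le> B(t)\<close> with \<open>B(t) = 2t/(1 - t\<^sup>2)\<close>, \<open>t/(1 - t)\<close> or \<open>0\<close>,
  while \<open>z\<chi>'/\<chi>\<close> stays in a disc about \<open>3/2\<close> whose point nearest to \<open>0\<close> is \<open>L(t)\<close>.  The disc
  \<open>|w - 3/2| < 1\<close> lies in the image of the unit disc under \<open>1 + w + w\<^sup>2/2\<close>, hence \<open>f(rz)/r\<close> is
  in \<open>S\<^sup>*\<^sub>c\<^sub>a\<^sub>r\<close> as long as \<open>L(t) - 2t/(1 - t\<^sup>2) - B(t) > 1/2\<close> for \<open>t < r\<close>.  Rotations of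
  \<open>(1 + z)/(1 - z)\<close> and \<open>1 + z\<close> attain all bounds at once at a point where \<open>z\<chi>'/\<chi> = L(t)\<close>; at the
  root of \<open>L(t) - 2t/(1 - t\<^sup>2) - B(t) = 1/2\<close> this gives \<open>zf'/f = 1/2\<close>, a value that
  \<open>1 + w + w\<^sup>2/2\<close> omits on the unit disc, so the radius is sharp.\<close>

section \<open>Schwarz-Pick bounds for logarithmic derivatives\<close>

lemma Moebius_function_has_field_derivative:
  assumes "cnj w * z \<noteq> 1"
  shows "(Moebius_function 0 w has_field_derivative
          (1 - of_real (norm w ^ 2)) / (1 - cnj w * z) ^ 2) (at z)"
proof -
  have "(Moebius_function 0 w has_field_derivative
          ((1 - cnj w * z) + (z - w) * cnj w) / (1 - cnj w * z) ^ 2) (at z)"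
    unfolding Moebius_function_simple[abs_def] using assms
    by (auto intro!: derivative_eq_intros simp: power2_eq_square)
  moreover have "(1 - cnj w * z) + (z - w) * cnj w = 1 - of_real (norm w ^ 2)"
    using complex_norm_square[of w] by (simp add: algebra_simps)
  ultimately show ?thesis by simp
qed

lemma Moebius_function_has_field_derivative_0:
  "(Moebius_function 0 w has_field_derivative of_real (1 - norm w ^ 2)) (at 0)"
  using Moebius_function_has_field_derivative[of w 0] by simp

lemma Moebius_function_has_field_derivative_self:
  assumes "norm w < 1"
  shows "(Moebius_function 0 w has_field_derivative of_real (1 / (1 - norm w ^ 2))) (at w)"
proof -
  have w2: "norm w ^ 2 < 1" using assms by (simp add: abs_square_less_1)
  have ww: "cnj w * w = of_real (norm w ^ 2)"
    using complex_norm_square[of w] by (simp add: mult.commute)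
  then have "cnj w * w \<noteq> 1" using w2 by (metis less_irrefl of_real_eq_1_iff)
  moreover have "(1 - of_real (norm w ^ 2)) / (1 - cnj w * w) ^ 2 = (of_real (1 / (1 - norm w ^ 2)) :: complex)"
    using w2 by (simp add: ww power2_eq_square)
  ultimately show ?thesis using Moebius_function_has_field_derivative[of w w] by simp
qed

lemma Schwarz_Pick_deriv:
  assumes holo: "w holomorphic_on ball 0 1"
    and maps: "\<And>z. norm z < 1 \<Longrightarrow> norm (w z) < 1" and z0: "norm z0 < 1"
  shows "norm (deriv w z0) * (1 - norm z0 ^ 2) \<le> 1 - norm (w z0) ^ 2"
proof -
  define a where "a = w z0"
  define M where "M = Moebius_function 0 (- z0)"
  define G where "G = Moebius_function 0 a \<circ> (w \<circ> M)"
  have a: "norm a < 1" using maps z0 by (simp add: a_def)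
  have M: "M holomorphic_on ball 0 1" "\<And>z. norm z < 1 \<Longrightarrow> norm (M z) < 1" "M 0 = z0"
    using z0 by (auto simp: M_def Moebius_function_holomorphic Moebius_function_norm_lt_1
                            Moebius_function_of_zero)
  have "w \<circ> M holomorphic_on ball 0 1"
    by (rule holomorphic_on_compose_gen[OF M(1) holo]) (use M(2) in auto)
  then have G_holo: "G holomorphic_on ball 0 1"
    unfolding G_def using M(2) maps a
    by (intro holomorphic_on_compose_gen[OF _ Moebius_function_holomorphic[OF a]]) auto
  have G0: "G 0 = 0" by (simp add: G_def M a_def Moebius_function_eq_zero)
  have G_maps: "norm (G z) < 1" if "norm z < 1" for z
    using M maps a that by (simp add: G_def Moebius_function_norm_lt_1)
  have dw: "(w has_field_derivative deriv w z0) (at (M 0))"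
    using holomorphic_derivI[OF holo] z0 by (simp add: M)
  have dM: "(M has_field_derivative of_real (1 - norm z0 ^ 2)) (at 0)"
    using Moebius_function_has_field_derivative_0[of "- z0"] by (simp add: M_def)
  have dMa: "(Moebius_function 0 a has_field_derivative of_real (1 / (1 - norm a ^ 2))) (at ((w \<circ> M) 0))"
    using Moebius_function_has_field_derivative_self[OF a] by (simp add: M a_def)
  have "(G has_field_derivative
      of_real (1 / (1 - norm a ^ 2)) * (deriv w z0 * of_real (1 - norm z0 ^ 2))) (at 0)"
    unfolding G_def by (intro DERIV_chain dMa DERIV_chain[OF dw dM])
  then have dG: "deriv G 0 = of_real (1 / (1 - norm a ^ 2)) * (deriv w z0 * of_real (1 - norm z0 ^ 2))"
    by (rule DERIV_imp_deriv)
  have pos: "0 < 1 - norm a ^ 2" "0 < 1 - norm z0 ^ 2"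
    using a z0 by (simp_all add: abs_square_less_1)
  have "norm (deriv G 0) = norm (deriv w z0) * (1 - norm z0 ^ 2) / (1 - norm a ^ 2)"
    unfolding dG norm_mult norm_of_real using pos by (simp add: abs_of_pos)
  with Schwarz_Lemma(2)[OF G_holo G0 G_maps, of 0] pos show ?thesis
    by (simp add: a_def divide_le_eq)
qed

lemma Re_pos_deriv_bound:
  assumes holo: "p holomorphic_on ball 0 1"
    and pos: "\<And>z. norm z < 1 \<Longrightarrow> 0 < Re (p z)" and z: "norm z < 1"
  shows "norm (deriv p z) * (1 - norm z ^ 2) \<le> 2 * Re (p z)"
proof -
  have nz: "p u + 1 \<noteq> 0" if "norm u < 1" for u
  proof
    assume "p u + 1 = 0"
    then have "Re (p u + 1) = 0" by simp
    with pos[OF that] show False by simp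
  qed
  define w where "w = (\<lambda>u. (p u - 1) / (p u + 1))"
  have Re_p: "norm (p u + 1) ^ 2 - norm (p u - 1) ^ 2 = 4 * Re (p u)" for u
    unfolding cmod_power2 by (simp add: power2_eq_square algebra_simps)
  have w_holo: "w holomorphic_on ball 0 1"
    unfolding w_def using nz by (intro holomorphic_intros holo) auto
  have w_maps: "norm (w u) < 1" if "norm u < 1" for u
  proof -
    have "norm (p u - 1) ^ 2 < norm (p u + 1) ^ 2" using Re_p[of u] pos[OF that] by linarith
    then have "norm (p u - 1) < norm (p u + 1)" by (rule power_less_imp_less_base) simp
    then show ?thesis using nz[OF that] by (simp add: w_def norm_divide divide_less_eq)
  qed
  have "(w has_field_derivative (deriv p z * (p z + 1) - (p z - 1) * deriv p z) / (p z + 1) ^ 2) (at z)"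
    unfolding w_def using holomorphic_derivI[OF holo _ z[folded mem_ball_0]] nz[OF z]
    by (auto intro!: derivative_eq_intros simp: power2_eq_square)
  then have w': "deriv w z = 2 * deriv p z / (p z + 1) ^ 2"
    by (simp add: DERIV_imp_deriv algebra_simps)
  have "norm (w z) ^ 2 = norm (p z - 1) ^ 2 / norm (p z + 1) ^ 2"
    by (simp add: w_def norm_divide power_divide)
  then have "1 - norm (w z) ^ 2 = (norm (p z + 1) ^ 2 - norm (p z - 1) ^ 2) / norm (p z + 1) ^ 2"
    using nz[OF z] by (simp add: diff_divide_distrib)
  also have "\<dots> = 4 * Re (p z) / norm (p z + 1) ^ 2" by (simp only: Re_p)
  finally have "1 - norm (w z) ^ 2 = 4 * Re (p z) / norm (p z + 1) ^ 2" .
  with Schwarz_Pick_deriv[OF w_holo w_maps z] w' nz[OF z] show ?thesis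
    by (simp add: norm_divide norm_mult norm_power divide_le_cancel)
qed

lemma Re_pos_logderiv_bound:
  assumes holo: "p holomorphic_on ball 0 1"
    and pos: "\<And>z. norm z < 1 \<Longrightarrow> 0 < Re (p z)" and z: "norm z < 1"
  shows "norm (z * deriv p z / p z) \<le> 2 * norm z / (1 - norm z ^ 2)"
proof -
  have "norm (deriv p z) * (1 - norm z ^ 2) \<le> 2 * norm (p z)"
    using Re_pos_deriv_bound[OF assms] complex_Re_le_cmod[of "p z"] by linarith
  moreover have "0 < norm (p z)" "0 < 1 - norm z ^ 2"
    using pos[OF z] z by (auto simp: abs_square_less_1)
  ultimately have "norm z * norm (deriv p z) * (1 - norm z ^ 2) \<le> norm z * 2 * norm (p z)"
    by (simp add: mult.assoc mult_left_mono)
  with \<open>0 < norm (p z)\<close> \<open>0 < 1 - norm z ^ 2\<close> show ?thesis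
    by (simp add: norm_mult norm_divide divide_simps)
qed

lemma disc_logderiv_bound:
  assumes holo: "h holomorphic_on ball 0 1"
    and disc: "\<And>z. norm z < 1 \<Longrightarrow> norm (h z - 1) < 1" and h0: "h 0 = 1" and z: "norm z < 1"
  shows "norm (z * deriv h z / h z) \<le> norm z / (1 - norm z)"
proof -
  define w where "w = (\<lambda>u. h u - 1)"
  have w_holo: "w holomorphic_on ball 0 1" unfolding w_def by (intro holomorphic_intros holo)
  have w_maps: "norm (w u) < 1" if "norm u < 1" for u using disc[OF that] by (simp add: w_def)
  have w_le: "norm (w z) \<le> norm z"
    using Schwarz_Lemma(1)[OF w_holo _ w_maps z] h0 by (simp add: w_def)
  have "deriv w z = deriv h z"
    unfolding w_def using holomorphic_derivI[OF holo _ z[folded mem_ball_0]]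
    by (intro DERIV_imp_deriv) (auto intro!: derivative_eq_intros)
  with Schwarz_Pick_deriv[OF w_holo w_maps z]
  have "norm (deriv h z) * ((1 - norm z) * (1 + norm z)) \<le> (1 - norm (w z)) * (1 + norm (w z))"
    by (simp add: power2_eq_square algebra_simps)
  also have "\<dots> \<le> (1 - norm (w z)) * (1 + norm z)"
    using w_le w_maps[OF z] by (intro mult_left_mono) auto
  finally have "norm (deriv h z) * (1 - norm z) \<le> 1 - norm (w z)"
    using z by (simp add: mult.assoc[symmetric] mult_le_cancel_right_pos add_pos_nonneg)
  also have "1 - norm (w z) \<le> norm (h z)"
    using norm_triangle_ineq2[of 1 "- w z"] by (simp add: w_def norm_minus_commute)
  finally have "norm (deriv h z) * (1 - norm z) \<le> norm (h z)" .
  moreover have "0 < norm (h z)" "0 < 1 - norm z"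
    using disc[OF z] z by auto
  ultimately have "norm z * norm (deriv h z) * (1 - norm z) \<le> norm z * norm (h z)"
    by (simp add: mult.assoc mult_left_mono)
  with \<open>0 < norm (h z)\<close> \<open>0 < 1 - norm z\<close> show ?thesis
    by (simp add: norm_mult norm_divide divide_simps)
qed

section \<open>Subordination to \<open>1 + w + w\<^sup>2/2\<close>\<close>

lemma norm_minus_one_lt_if_square:
  fixes u :: complex
  assumes "0 \<le> Re u" and "norm (u^2 - 2) < 2"
  shows "norm (u - 1) < 1"
proof -
  define x y where "x = Re u" and "y = Im u"
  have "norm (u^2 - 2) ^ 2 < 2 ^ 2" using assms(2) by (intro power_strict_mono) auto
  then have "(x^2 - y^2 - 2)^2 + (2 * x * y)^2 < 4"
    unfolding cmod_power2 by (simp add: x_def y_def power2_eq_square algebra_simps)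
  then have "(x^2 + y^2)^2 < 4 * (x^2 - y^2)" by (simp add: power2_eq_square algebra_simps)
  also have "\<dots> \<le> (2 * x)^2" by (simp add: power2_eq_square)
  finally have "x^2 + y^2 < 2 * x"
    by (rule power_less_imp_less_base) (use assms(1) in \<open>simp add: x_def\<close>)
  then have "norm (u - 1) ^ 2 < 1 ^ 2"
    unfolding cmod_power2 by (simp add: x_def y_def power2_eq_square algebra_simps)
  then show ?thesis by (rule power_less_imp_less_base) simp
qed

text \<open>As \<open>1 + w + w\<^sup>2/2 = (1 + (1 + w)\<^sup>2)/2\<close>, the Schwarz function is \<open>w = \<surd>(2F - 1) - 1\<close>.\<close>

lemma subord_cardioid_if_disc:
  assumes holo: "F holomorphic_on ball 0 1" and F0: "F 0 = 1"
    and disc: "\<And>z. norm z < 1 \<Longrightarrow> norm (F z - 3/2) < 1"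
  shows "subord F (\<lambda>w. 1 + w + w^2/2)"
proof -
  define w where "w = (\<lambda>z. csqrt (2 * F z - 1) - 1)"
  have disc2: "norm ((2 * F z - 1) - 2) < 2" if "norm z < 1" for z
    using disc[OF that] norm_mult[of 2 "F z - 3/2"] by (simp add: algebra_simps)
  have "w holomorphic_on ball 0 1"
    unfolding w_def
  proof (intro holomorphic_intros holo)
    fix z :: complex assume "z \<in> ball 0 1"
    then have "\<bar>Re ((2 * F z - 1) - 2)\<bar> < 2"
      using disc2 abs_Re_le_cmod le_less_trans by fastforce
    then show "2 * F z - 1 \<notin> \<real>\<^sub>\<le>\<^sub>0" by (auto simp: complex_nonpos_Reals_iff)
  qed
  moreover have "w ` ball 0 1 \<subseteq> ball 0 1"
    using norm_minus_one_lt_if_square[OF Re_csqrt] disc2 by (auto simp: w_def)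
  moreover have "w 0 = 0" by (simp add: w_def F0)
  moreover have "F z = 1 + w z + (w z)^2 / 2" for z
    using power2_csqrt[of "2 * F z - 1"] by (simp add: w_def power2_diff field_simps)
  ultimately show ?thesis unfolding subord_def by blast
qed

lemma subord_cardioid_ne_half:
  assumes "subord F (\<lambda>w. 1 + w + w^2/2)" and "norm z < 1"
  shows "F z \<noteq> 1/2"
proof
  assume "F z = 1/2"
  obtain w where "w ` ball 0 1 \<subseteq> ball 0 1" and "F z = 1 + w z + (w z)^2/2"
    using assms by (auto simp: subord_def)
  then have "w z \<in> ball 0 1" and "(1 + w z)^2 = 0"
    using assms(2) \<open>F z = 1/2\<close> by (auto simp: power2_eq_square algebra_simps image_subset_iff)
  then show False by (simp add: add_eq_0_iff)
qed

section \<open>Dilations and the radius\<close>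

definition dilate :: "(complex \<Rightarrow> complex) \<Rightarrow> real \<Rightarrow> complex \<Rightarrow> complex" where
  "dilate f r z = f (of_real r * z) / of_real r"

definition normalized_quotient ::
    "(complex \<Rightarrow> complex) \<Rightarrow> (complex \<Rightarrow> complex) \<Rightarrow> complex \<Rightarrow> complex" where
  "normalized_quotient f g z = (if z = 0 then 1 else f z / g z)"

lemma classA_mult:
  assumes f: "f \<in> classA" and q: "q holomorphic_on ball 0 1" "q 0 = 1"
  shows "(\<lambda>z. f z * q z) \<in> classA"
proof -
  have f': "(f has_field_derivative 1) (at 0)" and f0: "f 0 = 0" and holo: "f holomorphic_on ball 0 1"
    using f holomorphic_derivI[of f "ball 0 1" 0] by (auto simp: classA_def)
  have "((\<lambda>z. f z * q z) has_field_derivative 1 * q 0 + deriv q 0 * f 0) (at 0)"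
    by (intro DERIV_mult f' holomorphic_derivI[OF q(1)]) auto
  then have "deriv (\<lambda>z. f z * q z) 0 = 1" using f0 q(2) by (simp add: DERIV_imp_deriv)
  then show ?thesis using holo q f0 by (simp add: classA_def holomorphic_on_mult)
qed

lemma normalized_quotient_id_holomorphic:
  assumes "f \<in> classA"
  shows "normalized_quotient f (\<lambda>z. z) holomorphic_on ball 0 1"
proof -
  have "(\<lambda>z. if z = 0 then deriv f 0 else (f z - f 0) / (z - 0)) holomorphic_on ball 0 1"
    using assms by (intro pole_lemma_open) (auto simp: classA_def)
  also have "(\<lambda>z. if z = 0 then deriv f 0 else (f z - f 0) / (z - 0)) = normalized_quotient f (\<lambda>z. z)"
    using assms by (auto simp: classA_def normalized_quotient_def)
  finally show ?thesis .
qed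

lemma normalized_quotient_id_nonzero:
  assumes "\<forall>z\<in>ball 0 1. z \<noteq> 0 \<longrightarrow> f z \<noteq> 0"
  shows "\<forall>z\<in>ball 0 1. normalized_quotient f (\<lambda>z. z) z \<noteq> 0"
  using assms by (simp add: normalized_quotient_def)

lemma normalized_quotient_holomorphic:
  assumes f: "f \<in> classA" and g: "g \<in> classA" "\<forall>z\<in>ball 0 1. z \<noteq> 0 \<longrightarrow> g z \<noteq> 0"
  shows "normalized_quotient f g holomorphic_on ball 0 1"
proof (rule holomorphic_transform)
  show "(\<lambda>z. normalized_quotient f (\<lambda>z. z) z / normalized_quotient g (\<lambda>z. z) z) holomorphic_on ball 0 1"
    using normalized_quotient_id_nonzero[OF g(2)]
    by (intro holomorphic_intros normalized_quotient_id_holomorphic f g(1)) auto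
  show "normalized_quotient f (\<lambda>z. z) z / normalized_quotient g (\<lambda>z. z) z = normalized_quotient f g z" if "z \<in> ball 0 1" for z
    using g(2) that by (simp add: normalized_quotient_def)
qed

lemma logderiv_quot_mult:
  assumes chi: "chi holomorphic_on ball 0 1" "\<forall>z\<in>ball 0 1. z \<noteq> 0 \<longrightarrow> chi z \<noteq> 0"
    and q: "q holomorphic_on ball 0 1" "\<forall>z\<in>ball 0 1. q z \<noteq> 0"
    and f: "\<And>z. z \<in> ball 0 1 \<Longrightarrow> f z = chi z * q z" and z: "z \<in> ball 0 1"
  shows "logderiv_quot f z = logderiv_quot chi z + z * deriv q z / q z"
proof (cases "z = 0")
  case False
  have "((\<lambda>z. chi z * q z) has_field_derivative deriv chi z * q z + deriv q z * chi z) (at z)"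
    using z by (intro DERIV_mult holomorphic_derivI[OF chi(1)] holomorphic_derivI[OF q(1)]) auto
  then have "(f has_field_derivative deriv chi z * q z + deriv q z * chi z) (at z)"
    by (rule has_field_derivative_transform_within_open[OF _ open_ball z]) (simp add: f)
  then have "deriv f z = deriv chi z * q z + deriv q z * chi z" by (rule DERIV_imp_deriv)
  with False z chi(2) q(2) f[OF z] show ?thesis
    by (simp add: logderiv_quot_def field_simps)
qed (simp add: logderiv_quot_def)

lemma logderiv_quot_mult3:
  assumes chi: "chi holomorphic_on ball 0 1" "\<forall>z\<in>ball 0 1. z \<noteq> 0 \<longrightarrow> chi z \<noteq> 0"
    and q: "q holomorphic_on ball 0 1" "\<forall>z\<in>ball 0 1. q z \<noteq> 0"
    and p: "p holomorphic_on ball 0 1" "\<forall>z\<in>ball 0 1. p z \<noteq> 0"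
    and f: "\<forall>z\<in>ball 0 1. f z = chi z * q z * p z" and z: "z \<in> ball 0 1"
  shows "logderiv_quot f z = logderiv_quot chi z + z * deriv q z / q z + z * deriv p z / p z"
proof -
  have "logderiv_quot f z = logderiv_quot (\<lambda>z. chi z * q z) z + z * deriv p z / p z"
    using chi q p f z by (intro logderiv_quot_mult) (auto intro!: holomorphic_intros)
  also have "logderiv_quot (\<lambda>z. chi z * q z) z = logderiv_quot chi z + z * deriv q z / q z"
    using chi q z by (intro logderiv_quot_mult) auto
  finally show ?thesis .
qed

lemma logderiv_quot_holomorphic:
  assumes f: "f \<in> classA" "\<forall>z\<in>ball 0 1. z \<noteq> 0 \<longrightarrow> f z \<noteq> 0"
  shows "logderiv_quot f holomorphic_on ball 0 1"
proof -
  define k where "k = normalized_quotient f (\<lambda>z. z)"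
  have k: "k holomorphic_on ball 0 1" "\<forall>z\<in>ball 0 1. k z \<noteq> 0"
    unfolding k_def using normalized_quotient_id_holomorphic[OF f(1)] normalized_quotient_id_nonzero[OF f(2)] by auto
  have "f z = z * k z" for z
    using f(1) by (simp add: k_def normalized_quotient_def classA_def)
  then have eq: "1 + z * deriv k z / k z = logderiv_quot f z" if "z \<in> ball 0 1" for z
    using logderiv_quot_mult[of "\<lambda>z. z" k f z] k that by (simp add: logderiv_quot_def)
  have "(\<lambda>z. 1 + z * deriv k z / k z) holomorphic_on ball 0 1"
    using k by (intro holomorphic_intros holomorphic_deriv) auto
  then show ?thesis by (rule holomorphic_transform) (rule eq)
qed

lemma dilate_has_field_derivative:
  assumes "(f has_field_derivative f') (at (of_real r * z))" and "r \<noteq> 0"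
  shows "(dilate f r has_field_derivative f') (at z)"
proof -
  have "((\<lambda>x. of_real r * x) has_field_derivative of_real r) (at z)"
    by (auto intro!: derivative_eq_intros)
  from DERIV_chain'[OF this assms(1)] have "(dilate f r has_field_derivative f' * of_real r / of_real r) (at z)"
    unfolding dilate_def[abs_def] by (rule DERIV_cdivide)
  then show ?thesis using assms(2) by simp
qed

lemma logderiv_quot_dilate:
  assumes "f field_differentiable at (of_real r * z)" and "r \<noteq> 0"
  shows "logderiv_quot (dilate f r) z = logderiv_quot f (of_real r * z)"
proof (cases "z = 0")
  case False
  have "deriv (dilate f r) z = deriv f (of_real r * z)"
    using assms by (intro DERIV_imp_deriv dilate_has_field_derivative)
                   (simp_all add: DERIV_deriv_iff_field_differentiable)
  with False assms(2) show ?thesis by (simp add: logderiv_quot_def dilate_def)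
qed (simp add: logderiv_quot_def)

lemma mult_of_real_in_ball:
  fixes z :: complex
  assumes "0 < r" "r \<le> 1" "z \<in> ball 0 1"
  shows "of_real r * z \<in> ball 0 1"
proof -
  have "r * norm z \<le> 1 * norm z" using assms by (intro mult_right_mono) auto
  then show ?thesis using assms by (simp add: norm_mult)
qed

lemma dilate_classA:
  assumes f: "f \<in> classA" and r: "0 < r" "r \<le> 1"
  shows "dilate f r \<in> classA"
proof -
  have holo: "f holomorphic_on ball 0 1" and "f 0 = 0" and "deriv f 0 = 1"
    using f by (auto simp: classA_def)
  have "(\<lambda>z. f (of_real r * z)) holomorphic_on ball 0 1"
    using mult_of_real_in_ball[OF r]
    by (intro holomorphic_on_compose_gen[OF _ holo, unfolded o_def] holomorphic_intros) auto
  moreover have "deriv (dilate f r) 0 = deriv f 0"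
    using holomorphic_derivI[OF holo, of 0] r
    by (intro DERIV_imp_deriv dilate_has_field_derivative) auto
  ultimately show ?thesis
    using r \<open>f 0 = 0\<close> \<open>deriv f 0 = 1\<close>
    by (auto simp: classA_def dilate_def[abs_def] intro!: holomorphic_intros)
qed

lemma dilate_in_SstarCar:
  assumes f: "f \<in> classA" "\<forall>z\<in>ball 0 1. z \<noteq> 0 \<longrightarrow> f z \<noteq> 0"
    and r: "0 < r" "r \<le> 1"
    and disc: "\<And>z. norm z < r \<Longrightarrow> norm (logderiv_quot f z - 3/2) < 1"
  shows "dilate f r \<in> SstarCar"
proof -
  have fr: "dilate f r \<in> classA" by (rule dilate_classA[OF f(1) r])
  have fr_nz: "\<forall>z\<in>ball 0 1. z \<noteq> 0 \<longrightarrow> dilate f r z \<noteq> 0"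
    using f(2) mult_of_real_in_ball[OF r] r by (simp add: dilate_def)
  have "norm (logderiv_quot (dilate f r) z - 3/2) < 1" if "norm z < 1" for z
  proof -
    have "of_real r * z \<in> ball 0 1" using mult_of_real_in_ball[OF r] that by simp
    then have "f field_differentiable at (of_real r * z)"
      using f(1) unfolding classA_def by (blast intro: holomorphic_on_imp_differentiable_at[OF _ open_ball])
    moreover have "norm (of_real r * z) < r"
      using r that by (simp add: norm_mult)
    ultimately show ?thesis using disc r by (simp add: logderiv_quot_dilate)
  qed
  then have "subord (logderiv_quot (dilate f r)) (\<lambda>w. 1 + w + w^2/2)"
    by (intro subord_cardioid_if_disc[OF logderiv_quot_holomorphic[OF fr fr_nz]])
       (simp_all add: logderiv_quot_def)
  with fr fr_nz show ?thesis unfolding SstarCar_def by blast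
qed

lemma dilate_notin_SstarCar:
  assumes holo: "f holomorphic_on ball 0 1" and z: "norm z < r" "r \<le> 1"
    and half: "logderiv_quot f z = 1/2"
  shows "dilate f r \<notin> SstarCar"
proof
  assume "dilate f r \<in> SstarCar"
  then have sub: "subord (logderiv_quot (dilate f r)) (\<lambda>w. 1 + w + w^2/2)"
    by (simp add: SstarCar_def)
  have r: "0 < r" using z by (meson norm_ge_zero le_less_trans)
  have "z \<in> ball 0 1" using z by simp
  then have "f field_differentiable at (of_real r * (z / of_real r))"
    using r by (simp add: holomorphic_on_imp_differentiable_at[OF holo open_ball])
  then have "logderiv_quot (dilate f r) (z / of_real r) = 1/2"
    using logderiv_quot_dilate[of f r "z / of_real r"] r half by simp
  moreover have "norm (z / of_real r) < 1" using r z(1) by (simp add: norm_divide divide_less_eq)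
  ultimately show False using subord_cardioid_ne_half[OF sub] by blast
qed

lemma car_radius_eqI:
  assumes R: "0 < R" "R \<le> 1"
    and inner: "\<And>r f. 0 < r \<Longrightarrow> r \<le> R \<Longrightarrow> f \<in> F \<Longrightarrow> dilate f r \<in> SstarCar"
    and outer: "\<And>r. R < r \<Longrightarrow> r \<le> 1 \<Longrightarrow> \<exists>f\<in>F. dilate f r \<notin> SstarCar"
  shows "car_radius F = R"
proof -
  define S where "S = {r. 0 < r \<and> r \<le> 1 \<and> (\<forall>f\<in>F. dilate f r \<in> SstarCar)}"
  have "R \<in> S" using R inner by (simp add: S_def)
  moreover have "r \<le> R" if r: "r \<in> S" for r
  proof (rule ccontr)
    assume "\<not> r \<le> R"
    then obtain f where "f \<in> F" "dilate f r \<notin> SstarCar" using outer[of r] r by (auto simp: S_def)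
    with r show False by (simp add: S_def)
  qed
  ultimately have "Sup S = R" by (rule cSup_eq_maximum)
  then show ?thesis by (simp add: car_radius_def S_def dilate_def[abs_def])
qed

section \<open>Factorisation of the classes\<close>

definition normalized_class :: "(complex \<Rightarrow> bool) \<Rightarrow> (complex \<Rightarrow> complex) set" where
  "normalized_class P = {p. p holomorphic_on ball 0 1 \<and> p 0 = 1 \<and> (\<forall>z\<in>ball 0 1. P (p z))}"

abbreviation Caratheodory_class :: "(complex \<Rightarrow> complex) set" where
  "Caratheodory_class \<equiv> normalized_class (\<lambda>w. 0 < Re w)"

abbreviation disc_class :: "(complex \<Rightarrow> complex) set" where
  "disc_class \<equiv> normalized_class (\<lambda>w. norm (w - 1) < 1)"

definition prod_class ::
    "(complex \<Rightarrow> complex) \<Rightarrow> (complex \<Rightarrow> complex) set \<Rightarrow> (complex \<Rightarrow> complex) set" where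
  "prod_class chi P =
     {f \<in> classA. \<exists>q\<in>Caratheodory_class. \<exists>p\<in>P. \<forall>z\<in>ball 0 1. f z = chi z * q z * p z}"

lemma quotient_condition_iff_factor:
  assumes g: "g \<in> classA" "\<forall>z\<in>ball 0 1. z \<noteq> 0 \<longrightarrow> g z \<noteq> 0"
    and f: "f \<in> classA" and P: "P 1"
  shows "(\<forall>z\<in>ball 0 1. z \<noteq> 0 \<longrightarrow> P (f z / g z))
     \<longleftrightarrow> (\<exists>p\<in>normalized_class P. \<forall>z\<in>ball 0 1. f z = g z * p z)"
proof
  assume cond: "\<forall>z\<in>ball 0 1. z \<noteq> 0 \<longrightarrow> P (f z / g z)"
  have "normalized_quotient f g \<in> normalized_class P"
    using normalized_quotient_holomorphic[OF f g] cond P by (auto simp: normalized_class_def normalized_quotient_def)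
  moreover have "f z = g z * normalized_quotient f g z" if "z \<in> ball 0 1" for z
    using f g that by (auto simp: normalized_quotient_def classA_def)
  ultimately show "\<exists>p\<in>normalized_class P. \<forall>z\<in>ball 0 1. f z = g z * p z" by blast
next
  assume "\<exists>p\<in>normalized_class P. \<forall>z\<in>ball 0 1. f z = g z * p z"
  then show "\<forall>z\<in>ball 0 1. z \<noteq> 0 \<longrightarrow> P (f z / g z)"
    using g(2) by (auto simp: normalized_class_def)
qed

lemma F3_eq_prod_class:
  assumes "chi \<in> classA" "\<forall>z\<in>ball 0 1. z \<noteq> 0 \<longrightarrow> chi z \<noteq> 0"
  shows "F3 chi = prod_class chi {\<lambda>_. 1}"
  using quotient_condition_iff_factor[OF assms, of _ "\<lambda>w. 0 < Re w"]
  by (auto simp: F3_def prod_class_def)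

lemma F3_quotient_eq_prod_class:
  assumes chi: "chi \<in> classA" "\<forall>z\<in>ball 0 1. z \<noteq> 0 \<longrightarrow> chi z \<noteq> 0" and P: "P 1"
  shows "{f \<in> classA. \<exists>g\<in>F3 chi. \<forall>z\<in>ball 0 1. z \<noteq> 0 \<longrightarrow> P (f z / g z)}
       = prod_class chi (normalized_class P)"
proof -
  have g_nz: "\<forall>z\<in>ball 0 1. z \<noteq> 0 \<longrightarrow> g z \<noteq> 0" if "g \<in> F3 chi" for g
    using that by (fastforce simp: F3_def)
  have F3: "g \<in> F3 chi \<longleftrightarrow> g \<in> classA \<and> (\<exists>q\<in>Caratheodory_class. \<forall>z\<in>ball 0 1. g z = chi z * q z)"
    for g
    by (simp add: F3_eq_prod_class[OF chi] prod_class_def)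
  show ?thesis
  proof (intro equalityI subsetI)
    fix f assume "f \<in> {f \<in> classA. \<exists>g\<in>F3 chi. \<forall>z\<in>ball 0 1. z \<noteq> 0 \<longrightarrow> P (f z / g z)}"
    then obtain g where f: "f \<in> classA" and g: "g \<in> F3 chi"
      and cond: "\<forall>z\<in>ball 0 1. z \<noteq> 0 \<longrightarrow> P (f z / g z)" by blast
    have gA: "g \<in> classA" using g by (simp add: F3_def)
    obtain p where "p \<in> normalized_class P" "\<forall>z\<in>ball 0 1. f z = g z * p z"
      using cond quotient_condition_iff_factor[where P = P, OF gA g_nz[OF g] f P] by blast
    moreover obtain q where "q \<in> Caratheodory_class" "\<forall>z\<in>ball 0 1. g z = chi z * q z"
      using g F3 by blast
    ultimately show "f \<in> prod_class chi (normalized_class P)"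
      using f by (auto simp: prod_class_def)
  next
    fix f assume "f \<in> prod_class chi (normalized_class P)"
    then obtain q p where f: "f \<in> classA" and q: "q \<in> Caratheodory_class"
      and p: "p \<in> normalized_class P" and f_eq: "\<forall>z\<in>ball 0 1. f z = chi z * q z * p z"
      by (auto simp: prod_class_def)
    define g where "g = (\<lambda>z. chi z * q z)"
    have gA: "g \<in> classA"
      using classA_mult[OF chi(1)] q by (auto simp: g_def normalized_class_def)
    with q have "g \<in> F3 chi" by (auto simp: F3 g_def)
    moreover have "\<forall>z\<in>ball 0 1. z \<noteq> 0 \<longrightarrow> P (f z / g z)"
      using quotient_condition_iff_factor[where P = P, OF gA g_nz[OF \<open>g \<in> F3 chi\<close>] f P] p f_eq
      by (auto simp: g_def)
    ultimately show "f \<in> {f \<in> classA. \<exists>g\<in>F3 chi. \<forall>z\<in>ball 0 1. z \<noteq> 0 \<longrightarrow> P (f z / g z)}"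
      using f by blast
  qed
qed

lemma F1_eq_prod_class:
  assumes "chi \<in> classA" "\<forall>z\<in>ball 0 1. z \<noteq> 0 \<longrightarrow> chi z \<noteq> 0"
  shows "F1 chi = prod_class chi Caratheodory_class"
  using F3_quotient_eq_prod_class[OF assms, of "\<lambda>w. 0 < Re w"] by (simp add: F1_def)

lemma F2_eq_prod_class:
  assumes "chi \<in> classA" "\<forall>z\<in>ball 0 1. z \<noteq> 0 \<longrightarrow> chi z \<noteq> 0"
  shows "F2 chi = prod_class chi disc_class"
  using F3_quotient_eq_prod_class[OF assms, of "\<lambda>w. norm (w - 1) < 1"] by (simp add: F2_def)

section \<open>Sharp bounds for the logarithmic derivatives of the factors\<close>

definition logderiv_sharp_bound :: "(complex \<Rightarrow> complex) set \<Rightarrow> (real \<Rightarrow> real) \<Rightarrow> bool" where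
  "logderiv_sharp_bound P B \<longleftrightarrow>
     (\<forall>p\<in>P. p holomorphic_on ball 0 1 \<and> p 0 = 1 \<and>
        (\<forall>z\<in>ball 0 1. p z \<noteq> 0 \<and> norm (z * deriv p z / p z) \<le> B (norm z))) \<and>
     (\<forall>z\<in>ball 0 1. \<exists>p\<in>P. z * deriv p z / p z = - of_real (B (norm z))) \<and>
     mono_on {0..<1} B"

lemma rotation_to_negative_axis:
  fixes z :: complex
  shows "\<exists>a. norm a = 1 \<and> a * z = - of_real (norm z)"
proof (cases "z = 0")
  case False
  then show ?thesis by (intro exI[of _ "- of_real (norm z) / z"]) (simp add: norm_divide)
qed (auto intro: exI[of _ 1])

lemma Re_Cayley_pos:
  assumes "norm w < 1"
  shows "0 < Re ((1 + w) / (1 - w))"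
proof -
  have "Re ((1 + w) / (1 - w)) = (1 - norm w ^ 2) / norm (1 - w) ^ 2"
    unfolding Re_divide cmod_power2 by (simp add: power2_eq_square algebra_simps)
  moreover have "0 < 1 - norm w ^ 2" using assms by (simp add: abs_square_less_1)
  moreover have "1 - w \<noteq> 0" using assms by auto
  ultimately show ?thesis by simp
qed

lemma logderiv_sharp_bound_Caratheodory:
  "logderiv_sharp_bound Caratheodory_class (\<lambda>t. 2 * t / (1 - t^2))"
proof -
  have bound: "p holomorphic_on ball 0 1 \<and> p 0 = 1 \<and>
      (\<forall>z\<in>ball 0 1. p z \<noteq> 0 \<and> norm (z * deriv p z / p z) \<le> 2 * norm z / (1 - norm z ^ 2))"
    if "p \<in> Caratheodory_class" for p
    using that by (force simp: normalized_class_def intro: Re_pos_logderiv_bound)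
  have sharp: "\<exists>q\<in>Caratheodory_class. z * deriv q z / q z = - of_real (2 * norm z / (1 - norm z ^ 2))"
    if z: "z \<in> ball 0 1" for z
  proof -
    obtain a where a: "norm a = 1" "a * z = - of_real (norm z)"
      using rotation_to_negative_axis by blast
    define q where "q = (\<lambda>u. (1 + a * u) / (1 - a * u))"
    have au: "norm (a * u) < 1" if "u \<in> ball 0 1" for u
      using a that by (simp add: norm_mult)
    have nz: "1 - a * u \<noteq> 0" "1 + a * u \<noteq> 0" if "u \<in> ball 0 1" for u
    proof -
      show "1 - a * u \<noteq> 0" using au[OF that] by auto
      show "1 + a * u \<noteq> 0" using au[OF that] by (metis add_eq_0_iff norm_minus_cancel norm_one less_irrefl)
    qed
    have q: "q \<in> Caratheodory_class"
      using nz au Re_Cayley_pos by (auto simp: q_def normalized_class_def intro!: holomorphic_intros)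
    have "(q has_field_derivative 2 * a / (1 - a * z)^2) (at z)"
      unfolding q_def using nz[OF z]
      by (auto intro!: derivative_eq_intros simp: power2_eq_square field_simps)
    then have "z * deriv q z / q z = z * (2 * a / (1 - a * z)^2) / ((1 + a * z) / (1 - a * z))"
      by (simp add: DERIV_imp_deriv q_def)
    also have "\<dots> = 2 * (a * z) / ((1 - a * z) * (1 + a * z))"
      using nz[OF z] by (simp add: power2_eq_square)
    also have "\<dots> = - of_real (2 * norm z / (1 - norm z ^ 2))"
      by (simp add: a(2) power2_eq_square field_simps)
    finally show ?thesis using q by blast
  qed
  have "mono_on {0..<1} (\<lambda>t::real. 2 * t / (1 - t^2))"
    by (intro mono_onI frac_le) (auto simp: power_mono abs_square_less_1)
  with bound sharp show ?thesis unfolding logderiv_sharp_bound_def by blast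
qed

lemma logderiv_sharp_bound_disc: "logderiv_sharp_bound disc_class (\<lambda>t. t / (1 - t))"
proof -
  have bound: "p holomorphic_on ball 0 1 \<and> p 0 = 1 \<and>
      (\<forall>z\<in>ball 0 1. p z \<noteq> 0 \<and> norm (z * deriv p z / p z) \<le> norm z / (1 - norm z))"
    if p: "p \<in> disc_class" for p
  proof -
    have "p z \<noteq> 0" if "z \<in> ball 0 1" for z using p that by (force simp: normalized_class_def)
    with p show ?thesis by (auto simp: normalized_class_def intro: disc_logderiv_bound)
  qed
  have sharp: "\<exists>p\<in>disc_class. z * deriv p z / p z = - of_real (norm z / (1 - norm z))"
    if z: "z \<in> ball 0 1" for z
  proof -
    obtain a where a: "norm a = 1" "a * z = - of_real (norm z)"
      using rotation_to_negative_axis by blast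
    define p where "p = (\<lambda>u. 1 + a * u)"
    have "p \<in> disc_class"
      using a by (auto simp: p_def normalized_class_def norm_mult intro!: holomorphic_intros)
    moreover have "(p has_field_derivative a) (at z)"
      unfolding p_def by (auto intro!: derivative_eq_intros)
    then have "z * deriv p z / p z = - of_real (norm z / (1 - norm z))"
      using z by (simp add: DERIV_imp_deriv p_def a(2) mult.commute[of z] field_simps)
    ultimately show ?thesis by blast
  qed
  have "mono_on {0..<1} (\<lambda>t::real. t / (1 - t))"
    by (intro mono_onI frac_le) auto
  with bound sharp show ?thesis unfolding logderiv_sharp_bound_def by blast
qed

lemma logderiv_sharp_bound_one: "logderiv_sharp_bound {\<lambda>_. 1} (\<lambda>_. 0)"
  by (simp add: logderiv_sharp_bound_def mono_on_def)

lemma logderiv_sharp_boundD: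
  assumes "logderiv_sharp_bound P B" and "p \<in> P"
  shows "p holomorphic_on ball 0 1" and "p 0 = 1" and "\<forall>z\<in>ball 0 1. p z \<noteq> 0"
    and "\<And>z. z \<in> ball 0 1 \<Longrightarrow> norm (z * deriv p z / p z) \<le> B (norm z)"
  using assms by (auto simp: logderiv_sharp_bound_def)

lemma logderiv_sharp_bound_attains:
  assumes "logderiv_sharp_bound P B" and "z \<in> ball 0 1"
  shows "\<exists>p\<in>P. z * deriv p z / p z = - of_real (B (norm z))"
  using assms by (simp add: logderiv_sharp_bound_def)

section \<open>The radius of a product class\<close>

definition least_root_in_unit_interval :: "(real \<Rightarrow> real) \<Rightarrow> real \<Rightarrow> bool" where
  "least_root_in_unit_interval p R \<longleftrightarrow> 0 < R \<and> R < 1 \<and> p R = 0 \<and> (\<forall>s. 0 < s \<and> s < R \<longrightarrow> p s \<noteq> 0)"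

locale logderiv_kernel =
  fixes chi :: "complex \<Rightarrow> complex" and L :: "real \<Rightarrow> real" and \<rho> :: real
  assumes chi_classA: "chi \<in> classA"
    and chi_nonzero: "\<forall>z\<in>ball 0 1. z \<noteq> 0 \<longrightarrow> chi z \<noteq> 0"
    and \<rho>: "0 < \<rho>" "\<rho> < 1"
    and logderiv_disc: "\<And>z. norm z \<le> \<rho> \<Longrightarrow> norm (logderiv_quot chi z - 3/2) \<le> 3/2 - L (norm z)"
    and L_antimono: "antimono_on {0..\<rho>} L"
    and logderiv_attains: "\<And>t. 0 \<le> t \<Longrightarrow> t \<le> \<rho> \<Longrightarrow> \<exists>z. norm z = t \<and> logderiv_quot chi z = of_real (L t)"
begin

lemma F1_eq: "F1 chi = prod_class chi Caratheodory_class"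
  by (rule F1_eq_prod_class[OF chi_classA chi_nonzero])

lemma F2_eq: "F2 chi = prod_class chi disc_class"
  by (rule F2_eq_prod_class[OF chi_classA chi_nonzero])

lemma F3_eq: "F3 chi = prod_class chi {\<lambda>_. 1}"
  by (rule F3_eq_prod_class[OF chi_classA chi_nonzero])

lemma margin_strict_antimono:
  assumes B: "mono_on {0..<1} B" and st: "0 \<le> s" "s < t" "t \<le> \<rho>"
  shows "L t - 2 * t / (1 - t^2) - B t < L s - 2 * s / (1 - s^2) - B s"
proof -
  have "L t \<le> L s" using L_antimono st by (auto intro: monotone_onD)
  moreover have "B s \<le> B t" using B st \<rho> by (auto intro: mono_onD)
  moreover have "2 * s / (1 - s^2) < 2 * t / (1 - t^2)"
    using st \<rho> by (intro frac_less) (auto simp: power_mono abs_square_less_1)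
  ultimately show ?thesis by linarith
qed

lemma prod_class_logderiv_bound:
  assumes B: "logderiv_sharp_bound P B" and f: "f \<in> prod_class chi P"
  shows "\<forall>z\<in>ball 0 1. z \<noteq> 0 \<longrightarrow> f z \<noteq> 0"
    and "\<And>z. norm z \<le> \<rho> \<Longrightarrow>
           norm (logderiv_quot f z - 3/2) \<le> 3/2 - (L (norm z) - 2 * norm z / (1 - norm z ^ 2) - B (norm z))"
proof -
  obtain q p where q: "q \<in> Caratheodory_class" and p: "p \<in> P"
    and f_eq: "\<forall>z\<in>ball 0 1. f z = chi z * q z * p z"
    using f by (auto simp: prod_class_def)
  note q' = logderiv_sharp_boundD[OF logderiv_sharp_bound_Caratheodory q]
    and p' = logderiv_sharp_boundD[OF B p]
  show "\<forall>z\<in>ball 0 1. z \<noteq> 0 \<longrightarrow> f z \<noteq> 0" using f_eq chi_nonzero q'(3) p'(3) by simp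
  fix z :: complex assume z: "norm z \<le> \<rho>"
  then have z1: "z \<in> ball 0 1" using \<rho> by simp
  have "norm (logderiv_quot f z - 3/2)
      = norm ((logderiv_quot chi z - 3/2) + z * deriv q z / q z + z * deriv p z / p z)"
    using logderiv_quot_mult3[OF _ chi_nonzero q'(1,3) p'(1,3) f_eq z1] chi_classA
    by (simp add: classA_def algebra_simps)
  also have "\<dots> \<le> norm (logderiv_quot chi z - 3/2) + norm (z * deriv q z / q z)
                 + norm (z * deriv p z / p z)"
    by (intro norm_triangle_le add_mono norm_triangle_ineq order_refl)
  also have "\<dots> \<le> (3/2 - L (norm z)) + 2 * norm z / (1 - norm z ^ 2) + B (norm z)"
    using logderiv_disc[OF z] q'(4)[OF z1] p'(4)[OF z1] by (intro add_mono) auto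
  finally show "norm (logderiv_quot f z - 3/2)
      \<le> 3/2 - (L (norm z) - 2 * norm z / (1 - norm z ^ 2) - B (norm z))" by simp
qed

lemma prod_class_logderiv_attains:
  assumes B: "logderiv_sharp_bound P B" and t: "0 \<le> t" "t \<le> \<rho>"
  shows "\<exists>f\<in>prod_class chi P. f holomorphic_on ball 0 1 \<and>
           (\<exists>z. norm z = t \<and> logderiv_quot f z = of_real (L t - 2 * t / (1 - t^2) - B t))"
proof -
  obtain z where z: "norm z = t" "logderiv_quot chi z = of_real (L t)"
    using logderiv_attains[OF t] by blast
  have z1: "z \<in> ball 0 1" using z t \<rho> by simp
  obtain q where q: "q \<in> Caratheodory_class"
    and q_z: "z * deriv q z / q z = - of_real (2 * t / (1 - t^2))"
    using logderiv_sharp_bound_attains[OF logderiv_sharp_bound_Caratheodory z1] z(1) by blast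
  obtain p where p: "p \<in> P" and p_z: "z * deriv p z / p z = - of_real (B t)"
    using logderiv_sharp_bound_attains[OF B z1] z(1) by blast
  note q' = logderiv_sharp_boundD[OF logderiv_sharp_bound_Caratheodory q]
    and p' = logderiv_sharp_boundD[OF B p]
  define f where "f = (\<lambda>z. chi z * q z * p z)"
  have fA: "f \<in> classA"
    unfolding f_def using q'(1,2) p'(1,2) by (intro classA_mult[OF classA_mult[OF chi_classA]]) auto
  then have "f \<in> prod_class chi P" using q p by (auto simp: prod_class_def f_def)
  moreover have "f holomorphic_on ball 0 1" using fA by (simp add: classA_def)
  moreover have "logderiv_quot f z = of_real (L t - 2 * t / (1 - t^2) - B t)"
    using logderiv_quot_mult3[OF _ chi_nonzero q'(1,3) p'(1,3) _ z1] chi_classA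
    by (simp add: f_def z(2) q_z p_z classA_def)
  ultimately show ?thesis using z(1) by blast
qed

lemma car_radius_prod_class:
  assumes B: "logderiv_sharp_bound P B" and R: "0 < R" "R \<le> \<rho>"
    and margin: "L R - 2 * R / (1 - R^2) - B R = 1/2"
  shows "car_radius (prod_class chi P) = R"
proof (rule car_radius_eqI)
  show "0 < R" "R \<le> 1" using R \<rho> by auto
  show "dilate f r \<in> SstarCar" if r: "0 < r" "r \<le> R" and f: "f \<in> prod_class chi P" for r f
  proof (rule dilate_in_SstarCar[OF _ prod_class_logderiv_bound(1)[OF B f] r(1)])
    show "f \<in> classA" "r \<le> 1" using f r R \<rho> by (auto simp: prod_class_def)
    show "norm (logderiv_quot f z - 3/2) < 1" if "norm z < r" for z
      using prod_class_logderiv_bound(2)[OF B f, of z] margin_strict_antimono[of B "norm z" R]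
        B margin that r R by (auto simp: logderiv_sharp_bound_def)
  qed
  show "\<exists>f\<in>prod_class chi P. dilate f r \<notin> SstarCar" if r: "R < r" "r \<le> 1" for r
  proof -
    obtain f z where "f \<in> prod_class chi P" "f holomorphic_on ball 0 1" "norm z = R"
      and "logderiv_quot f z = 1/2"
      using prod_class_logderiv_attains[OF B, of R] R margin by auto
    then show ?thesis using r dilate_notin_SstarCar[of f z r] by auto
  qed
qed

lemma car_radius_prod_class_root:
  assumes B: "logderiv_sharp_bound P B"
    and margin_iff: "\<And>t. 0 < t \<Longrightarrow> t \<le> \<rho> \<Longrightarrow> L t - 2 * t / (1 - t^2) - B t = 1/2 \<longleftrightarrow> p t = 0"
    and R: "0 < R" "R \<le> \<rho>" "p R = 0"
  shows "car_radius (prod_class chi P) = R"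
  using car_radius_prod_class[OF B R(1,2)] margin_iff R by simp

lemma car_radius_prod_class_least_root:
  assumes B: "logderiv_sharp_bound P B"
    and margin_iff: "\<And>t. 0 < t \<Longrightarrow> t \<le> \<rho> \<Longrightarrow> L t - 2 * t / (1 - t^2) - B t = 1/2 \<longleftrightarrow> p t = 0"
    and p: "continuous_on {0..c} p" "0 < p 0" "p c < 0" and c: "0 \<le> c" "c \<le> \<rho>"
  shows "least_root_in_unit_interval p (car_radius (prod_class chi P))"
proof -
  obtain R where R: "0 \<le> R" "R \<le> c" "p R = 0"
    using IVT2'[of p c 0 0] p c by (auto simp: less_imp_le)
  have "0 < R" using R p(2) by (cases "R = 0") auto
  then have radius: "car_radius (prod_class chi P) = R"
    using car_radius_prod_class_root[OF B margin_iff] R c by simp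
  have "p s \<noteq> 0" if "0 < s" "s < R" for s
    using margin_strict_antimono[of B s R] B margin_iff[of s] margin_iff[of R] that R c
    by (auto simp: logderiv_sharp_bound_def)
  then show ?thesis
    using radius \<open>0 < R\<close> R c \<rho> by (auto simp: least_root_in_unit_interval_def)
qed

lemma car_radius_F1_eqI:
  assumes "\<And>t. 0 < t \<Longrightarrow> t \<le> \<rho> \<Longrightarrow> L t - 2 * t / (1 - t^2) - 2 * t / (1 - t^2) = 1/2 \<longleftrightarrow> p t = 0"
    and "0 < R" "R \<le> \<rho>" "p R = 0"
  shows "car_radius (F1 chi) = R"
  unfolding F1_eq using assms by (rule car_radius_prod_class_root[OF logderiv_sharp_bound_Caratheodory])

lemma car_radius_F2_eqI:
  assumes "\<And>t. 0 < t \<Longrightarrow> t \<le> \<rho> \<Longrightarrow> L t - 2 * t / (1 - t^2) - t / (1 - t) = 1/2 \<longleftrightarrow> p t = 0"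
    and "0 < R" "R \<le> \<rho>" "p R = 0"
  shows "car_radius (F2 chi) = R"
  unfolding F2_eq using assms by (rule car_radius_prod_class_root[OF logderiv_sharp_bound_disc])

lemma car_radius_F3_eqI:
  assumes "\<And>t. 0 < t \<Longrightarrow> t \<le> \<rho> \<Longrightarrow> L t - 2 * t / (1 - t^2) = 1/2 \<longleftrightarrow> p t = 0"
    and "0 < R" "R \<le> \<rho>" "p R = 0"
  shows "car_radius (F3 chi) = R"
  unfolding F3_eq
  by (rule car_radius_prod_class_root[where p = p, OF logderiv_sharp_bound_one _ assms(2-4)])
     (use assms(1) in \<open>simp only: diff_zero\<close>)

lemma car_radius_F1_least_root:
  assumes "\<And>t. 0 < t \<Longrightarrow> t \<le> \<rho> \<Longrightarrow> L t - 2 * t / (1 - t^2) - 2 * t / (1 - t^2) = 1/2 \<longleftrightarrow> p t = 0"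
    and "continuous_on {0..c} p" "0 < p 0" "p c < 0" "0 \<le> c" "c \<le> \<rho>"
  shows "least_root_in_unit_interval p (car_radius (F1 chi))"
  unfolding F1_eq using assms by (rule car_radius_prod_class_least_root[OF logderiv_sharp_bound_Caratheodory])

lemma car_radius_F2_least_root:
  assumes "\<And>t. 0 < t \<Longrightarrow> t \<le> \<rho> \<Longrightarrow> L t - 2 * t / (1 - t^2) - t / (1 - t) = 1/2 \<longleftrightarrow> p t = 0"
    and "continuous_on {0..c} p" "0 < p 0" "p c < 0" "0 \<le> c" "c \<le> \<rho>"
  shows "least_root_in_unit_interval p (car_radius (F2 chi))"
  unfolding F2_eq using assms by (rule car_radius_prod_class_least_root[OF logderiv_sharp_bound_disc])

lemma car_radius_F3_least_root:
  assumes "\<And>t. 0 < t \<Longrightarrow> t \<le> \<rho> \<Longrightarrow> L t - 2 * t / (1 - t^2) = 1/2 \<longleftrightarrow> p t = 0"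
    and "continuous_on {0..c} p" "0 < p 0" "p c < 0" "0 \<le> c" "c \<le> \<rho>"
  shows "least_root_in_unit_interval p (car_radius (F3 chi))"
  unfolding F3_eq
  by (rule car_radius_prod_class_least_root[where p = p, OF logderiv_sharp_bound_one _ assms(2-6)])
     (use assms(1) in \<open>simp only: diff_zero\<close>)

end

section \<open>The five kernels\<close>

text \<open>On the circle \<open>|u| = t\<close>, \<open>|a + bu|\<^sup>2\<close> is affine in \<open>Re u \<in> [-t, t]\<close>, hence a convex combination
  of its values at \<open>u = \<plusminus>t\<close>; a bound for a real Moebius map therefore holds on the whole circle
  once it holds at the two real points.\<close>

lemma norm_real_affine_sq_weights:
  fixes \<alpha> \<beta> :: real and u :: complex
  shows "2 * norm u * norm (of_real \<alpha> + of_real \<beta> * u) ^ 2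
       = (norm u - Re u) * (\<alpha> - \<beta> * norm u)^2 + (norm u + Re u) * (\<alpha> + \<beta> * norm u)^2"
proof -
  have "norm (of_real \<alpha> + of_real \<beta> * u) ^ 2 = \<alpha>^2 + 2 * \<alpha> * \<beta> * Re u + \<beta>^2 * norm u ^ 2"
    unfolding cmod_power2 by (simp add: power2_eq_square algebra_simps)
  then show ?thesis by (simp add: power2_eq_square algebra_simps)
qed

lemma norm_real_Moebius_le:
  fixes a b c d N D :: real and u :: complex
  assumes plus: "\<bar>a + b * norm u\<bar> * D \<le> N * \<bar>c + d * norm u\<bar>"
    and minus: "\<bar>a - b * norm u\<bar> * D \<le> N * \<bar>c - d * norm u\<bar>"
    and N: "0 \<le> N" and D: "0 < D" and nz: "of_real c + of_real d * u \<noteq> 0"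
  shows "norm ((of_real a + of_real b * u) / (of_real c + of_real d * u)) \<le> N / D"
proof -
  define t x where "t = norm u" and "x = Re u"
  have x: "\<bar>x\<bar> \<le> t" using abs_Re_le_cmod[of u] by (simp add: x_def t_def)
  note weights = norm_real_affine_sq_weights[where u = u, folded t_def x_def]
  have sq: "((a + s * b * t) * D)^2 \<le> (N * (c + s * d * t))^2" if "s = 1 \<or> s = -1" for s :: real
  proof -
    have "\<bar>(a + s * b * t) * D\<bar> \<le> \<bar>N * (c + s * d * t)\<bar>"
      using that plus minus N D by (auto simp: t_def abs_mult)
    then show ?thesis by (simp only: abs_le_square_iff)
  qed
  have "norm (of_real a + of_real b * u) * D \<le> N * norm (of_real c + of_real d * u)"
  proof (cases "t = 0")
    case True
    then show ?thesis using plus by (simp add: t_def norm_mult)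
  next
    case False
    then have "0 < t" by (simp add: t_def)
    have "2 * t * (norm (of_real a + of_real b * u) * D) ^ 2
        = D^2 * (2 * t * norm (of_real a + of_real b * u) ^ 2)"
      by (simp add: power_mult_distrib)
    also have "\<dots> = (t - x) * ((a - b * t) * D)^2 + (t + x) * ((a + b * t) * D)^2"
      unfolding weights by (simp add: power2_eq_square algebra_simps)
    also have "\<dots> \<le> (t - x) * (N * (c - d * t))^2 + (t + x) * (N * (c + d * t))^2"
      using sq[of 1] sq[of "-1"] x by (intro add_mono mult_left_mono) auto
    also have "\<dots> = N^2 * (2 * t * norm (of_real c + of_real d * u) ^ 2)"
      unfolding weights by (simp add: power2_eq_square algebra_simps)
    also have "\<dots> = 2 * t * (N * norm (of_real c + of_real d * u)) ^ 2"
      by (simp add: power_mult_distrib)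
    finally have "(norm (of_real a + of_real b * u) * D) ^ 2
        \<le> (N * norm (of_real c + of_real d * u)) ^ 2"
      using \<open>0 < t\<close> by simp
    then show ?thesis by (rule power2_le_imp_le) (use N in simp)
  qed
  then show ?thesis using nz D by (simp add: norm_divide divide_simps)
qed

lemma Koebe_kernel_disc_bound:
  fixes u :: complex
  assumes "norm u \<le> 2/5"
  shows "norm ((1 + u) / (1 - u) - 3/2) \<le> 3/2 - (1 - norm u) / (1 + norm u)"
proof -
  define t where "t = norm u"
  have t: "0 \<le> t" "t \<le> 2/5" "t * t \<le> 4/25"
    using assms mult_mono[of t "2/5" t "2/5"] by (auto simp: t_def)
  have "1 - u \<noteq> 0" using assms by auto
  then have "(1 + u) / (1 - u) - 3/2 = (of_real (-1) + of_real 5 * u) / (of_real 2 + of_real (-2) * u)"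
    by (simp add: field_simps)
  also have "norm \<dots> \<le> (1 + 5 * t) / (2 * (1 + t))"
    using t \<open>1 - u \<noteq> 0\<close>
    by (intro norm_real_Moebius_le) (auto simp: t_def[symmetric] abs_if algebra_simps)
  also have "\<dots> = 3/2 - (1 - t) / (1 + t)" using t by (simp add: field_simps)
  finally show ?thesis by (simp add: t_def)
qed

lemma z_div_one_plus_z_kernel_disc_bound:
  fixes u :: complex
  assumes "norm u \<le> 2/5"
  shows "norm (1 / (1 + u) - 3/2) \<le> 3/2 - 1 / (1 + norm u)"
proof -
  define t where "t = norm u"
  have t: "0 \<le> t" "t \<le> 2/5" "t * t \<le> 4/25"
    using assms mult_mono[of t "2/5" t "2/5"] by (auto simp: t_def)
  have "1 + u \<noteq> 0" using assms by (auto simp: add_eq_0_iff)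
  then have "1 / (1 + u) - 3/2 = (of_real (-1) + of_real (-3) * u) / (of_real 2 + of_real 2 * u)"
    by (simp add: field_simps)
  also have "norm \<dots> \<le> (1 + 3 * t) / (2 * (1 + t))"
    using t \<open>1 + u \<noteq> 0\<close> mult_eq_0_iff[of 2 "1 + u"]
    by (intro norm_real_Moebius_le) (auto simp: t_def[symmetric] abs_if algebra_simps)
  also have "\<dots> = 3/2 - 1 / (1 + t)" using t by (simp add: field_simps)
  finally show ?thesis by (simp add: t_def)
qed

lemma z_plus_half_z_sq_kernel_disc_bound:
  fixes u :: complex
  assumes "norm u \<le> 2/5"
  shows "norm ((2 + 2 * u) / (2 + u) - 3/2) \<le> 3/2 - (2 - 2 * norm u) / (2 - norm u)"
proof -
  define t where "t = norm u"
  have t: "0 \<le> t" "t \<le> 2/5" using assms by (auto simp: t_def)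
  have "2 + u \<noteq> 0" using assms by (auto simp: add_eq_0_iff)
  then have "(2 + 2 * u) / (2 + u) - 3/2 = (of_real (-2) + of_real 1 * u) / (of_real 4 + of_real 2 * u)"
    by (simp add: field_simps)
  also have "norm \<dots> \<le> (2 + t) / (2 * (2 - t))"
    using t \<open>2 + u \<noteq> 0\<close> mult_eq_0_iff[of 2 "2 + u"]
    by (intro norm_real_Moebius_le) (auto simp: t_def[symmetric] abs_if algebra_simps)
  also have "\<dots> = 3/2 - (2 - 2 * t) / (2 - t)" using t by (simp add: field_simps)
  finally show ?thesis by (simp add: t_def)
qed

lemma logderiv_kernelI:
  assumes D: "\<And>z. z \<in> ball 0 1 \<Longrightarrow> (chi has_field_derivative D z) (at z)"
    and chi0: "chi 0 = 0" and D0: "D 0 = 1"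
    and chi_nz: "\<And>z. z \<in> ball 0 1 \<Longrightarrow> z \<noteq> 0 \<Longrightarrow> chi z \<noteq> 0"
    and A: "\<And>z. z \<in> ball 0 1 \<Longrightarrow> z * D z = A z * chi z"
    and A0: "A 0 = 1" and \<rho>: "0 < \<rho>" "\<rho> < 1"
    and disc: "\<And>z. norm z \<le> \<rho> \<Longrightarrow> norm (A z - 3/2) \<le> 3/2 - L (norm z)"
    and L: "antimono_on {0..\<rho>} L"
    and attains: "\<And>t. 0 \<le> t \<Longrightarrow> t \<le> \<rho> \<Longrightarrow> \<exists>z. norm z = t \<and> A z = of_real (L t)"
  shows "logderiv_kernel chi L \<rho>"
proof -
  have "chi holomorphic_on ball 0 1"
    unfolding holomorphic_on_open[OF open_ball] using D by blast
  moreover have "deriv chi 0 = 1" using D[of 0] D0 by (simp add: DERIV_imp_deriv)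
  ultimately have "chi \<in> classA" using chi0 by (simp add: classA_def)
  moreover have logd: "logderiv_quot chi z = A z" if "z \<in> ball 0 1" for z :: complex
    using chi_nz[OF that] A[OF that] D[OF that] A0 by (auto simp: logderiv_quot_def DERIV_imp_deriv)
  moreover have "norm z \<le> \<rho> \<Longrightarrow> z \<in> ball 0 1" for z using \<rho> by simp
  ultimately show ?thesis
    using chi_nz \<rho> disc L attains by unfold_locales force+
qed

lemma logderiv_kernel_identity: "logderiv_kernel (\<lambda>z. z) (\<lambda>_. 1) (2/5)"
proof (rule logderiv_kernelI[where D = "\<lambda>_. 1" and A = "\<lambda>_. 1"])
  show "\<exists>z::complex. norm z = t \<and> 1 = of_real 1" if "0 \<le> t" for t :: real
    using that by (intro exI[of _ "of_real t"]) auto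
qed (auto intro: antimono_on_const)

lemma logderiv_kernel_z_div_one_plus_z:
  "logderiv_kernel (\<lambda>z. z / (1 + z)) (\<lambda>t. 1 / (1 + t)) (2/5)"
proof (rule logderiv_kernelI[where D = "\<lambda>z. 1 / (1 + z)^2" and A = "\<lambda>z. 1 / (1 + z)"])
  have nz: "1 + z \<noteq> 0" if "norm z < 1" for z :: complex
    using that by (auto simp: add_eq_0_iff)
  show "((\<lambda>z. z / (1 + z)) has_field_derivative 1 / (1 + z)^2) (at z)" if "z \<in> ball 0 1" for z :: complex
    using nz[of z] that
    by (auto intro!: derivative_eq_intros simp: divide_simps) (simp add: eval_nat_numeral algebra_simps)
  show "z / (1 + z) \<noteq> 0" if "z \<in> ball 0 1" "z \<noteq> 0" for z :: complex
    using nz[of z] that by simp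
  show "z * (1 / (1 + z)^2) = 1 / (1 + z) * (z / (1 + z))" if "z \<in> ball 0 1" for z :: complex
    using nz[of z] that by (simp add: divide_simps) (simp add: eval_nat_numeral algebra_simps)
  show "norm (1 / (1 + z) - 3/2) \<le> 3/2 - 1 / (1 + norm z)" if "norm z \<le> 2/5" for z :: complex
    using z_div_one_plus_z_kernel_disc_bound[OF that] .
  show "antimono_on {0..2/5} (\<lambda>t::real. 1 / (1 + t))"
    by (intro monotone_onI) (auto simp: divide_simps)
  show "\<exists>z::complex. norm z = t \<and> 1 / (1 + z) = of_real (1 / (1 + t))" if "0 \<le> t" for t :: real
    using that by (intro exI[of _ "of_real t"]) auto
qed auto

lemma logderiv_kernel_z_div_one_minus_z_sq:
  "logderiv_kernel (\<lambda>z. z / (1 - z^2)) (\<lambda>t. (1 - t^2) / (1 + t^2)) (2/5)"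
proof (rule logderiv_kernelI[where D = "\<lambda>z. (1 + z^2) / (1 - z^2)^2" and A = "\<lambda>z. (1 + z^2) / (1 - z^2)"])
  have nz: "1 - z^2 \<noteq> 0" if "norm z < 1" for z :: complex
  proof -
    have "norm (z^2) < 1" using that by (simp add: norm_power abs_square_less_1)
    then show ?thesis by auto
  qed
  show "((\<lambda>z. z / (1 - z^2)) has_field_derivative (1 + z^2) / (1 - z^2)^2) (at z)"
    if "z \<in> ball 0 1" for z :: complex
    using nz[of z] that
    by (auto intro!: derivative_eq_intros simp: divide_simps) (simp add: eval_nat_numeral algebra_simps)
  show "z / (1 - z^2) \<noteq> 0" if "z \<in> ball 0 1" "z \<noteq> 0" for z :: complex
    using nz[of z] that by simp
  show "z * ((1 + z^2) / (1 - z^2)^2) = (1 + z^2) / (1 - z^2) * (z / (1 - z^2))"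
    if "z \<in> ball 0 1" for z :: complex
    using nz[of z] that by (simp add: divide_simps) (simp add: eval_nat_numeral algebra_simps)
  show "norm ((1 + z^2) / (1 - z^2) - 3/2) \<le> 3/2 - (1 - norm z ^ 2) / (1 + norm z ^ 2)"
    if "norm z \<le> 2/5" for z :: complex
  proof -
    have "norm z * norm z \<le> 2/5 * (2/5)" using that by (intro mult_mono) auto
    then have "norm (z^2) \<le> 2/5" by (simp add: norm_mult power2_eq_square)
    from Koebe_kernel_disc_bound[OF this] show ?thesis by (simp add: norm_power)
  qed
  show "antimono_on {0..2/5} (\<lambda>t::real. (1 - t^2) / (1 + t^2))"
  proof (intro monotone_onI)
    fix s t :: real assume "s \<in> {0..2/5}" "t \<in> {0..2/5}" "s \<le> t"
    then have "s^2 \<le> t^2" by (intro power_mono) auto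
    then show "(1 - t^2) / (1 + t^2) \<le> (1 - s^2) / (1 + s^2)"
      by (simp add: divide_simps algebra_simps add_pos_nonneg)
  qed
  show "\<exists>z::complex. norm z = t \<and> (1 + z^2) / (1 - z^2) = of_real ((1 - t^2) / (1 + t^2))"
    if "0 \<le> t" for t :: real
    using that by (intro exI[of _ "\<i> * of_real t"]) (auto simp: norm_mult power_mult_distrib)
qed auto

lemma logderiv_kernel_Koebe:
  "logderiv_kernel (\<lambda>z. z / (1 - z)^2) (\<lambda>t. (1 - t) / (1 + t)) (2/5)"
proof (rule logderiv_kernelI[where D = "\<lambda>z. (1 + z) / (1 - z)^3" and A = "\<lambda>z. (1 + z) / (1 - z)"])
  have nz: "1 - z \<noteq> 0" if "norm z < 1" for z :: complex
    using that by auto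
  show "((\<lambda>z. z / (1 - z)^2) has_field_derivative (1 + z) / (1 - z)^3) (at z)" if "z \<in> ball 0 1" for z :: complex
    using nz[of z] that
    by (auto intro!: derivative_eq_intros simp: divide_simps) (simp add: eval_nat_numeral algebra_simps)
  show "z / (1 - z)^2 \<noteq> 0" if "z \<in> ball 0 1" "z \<noteq> 0" for z :: complex
    using nz[of z] that by simp
  show "z * ((1 + z) / (1 - z)^3) = (1 + z) / (1 - z) * (z / (1 - z)^2)"
    if "z \<in> ball 0 1" for z :: complex
    using nz[of z] that by (simp add: divide_simps) (simp add: eval_nat_numeral algebra_simps)
  show "norm ((1 + z) / (1 - z) - 3/2) \<le> 3/2 - (1 - norm z) / (1 + norm z)"
    if "norm z \<le> 2/5" for z :: complex
    using Koebe_kernel_disc_bound[OF that] .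
  show "antimono_on {0..2/5} (\<lambda>t::real. (1 - t) / (1 + t))"
    by (intro monotone_onI) (auto simp: divide_simps algebra_simps)
  show "\<exists>z::complex. norm z = t \<and> (1 + z) / (1 - z) = of_real ((1 - t) / (1 + t))" if "0 \<le> t" for t :: real
    using that by (intro exI[of _ "- of_real t"]) auto
qed auto

lemma logderiv_kernel_z_plus_half_z_sq:
  "logderiv_kernel (\<lambda>z. z + z^2 / 2) (\<lambda>t. (2 - 2 * t) / (2 - t)) (2/5)"
proof (rule logderiv_kernelI[where D = "\<lambda>z. 1 + z" and A = "\<lambda>z. (2 + 2 * z) / (2 + z)"])
  have nz: "2 + z \<noteq> 0" if "norm z < 1" for z :: complex
    using that by (auto simp: add_eq_0_iff)
  show "((\<lambda>z. z + z^2 / 2) has_field_derivative 1 + z) (at z)" for z :: complex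
    by (auto intro!: derivative_eq_intros)
  have factor: "z + z^2 / 2 = z * (2 + z) / 2" for z :: complex
    by (simp add: power2_eq_square field_simps)
  show "z + z^2 / 2 \<noteq> 0" if "z \<in> ball 0 1" "z \<noteq> 0" for z :: complex
    using nz[of z] that by (simp add: factor)
  show "z * (1 + z) = (2 + 2 * z) / (2 + z) * (z + z^2 / 2)" if "z \<in> ball 0 1" for z :: complex
  proof -
    have "(2 + 2 * z) * (z + z^2 / 2) = z * (1 + z) * (2 + z)"
      by (simp add: power2_eq_square algebra_simps)
    then have "(2 + 2 * z) * (z + z^2 / 2) / (2 + z) = z * (1 + z)" using nz[of z] that by simp
    then show ?thesis by simp
  qed
  show "norm ((2 + 2 * z) / (2 + z) - 3/2) \<le> 3/2 - (2 - 2 * norm z) / (2 - norm z)"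
    if "norm z \<le> 2/5" for z :: complex
    using z_plus_half_z_sq_kernel_disc_bound[OF that] .
  show "antimono_on {0..2/5} (\<lambda>t::real. (2 - 2 * t) / (2 - t))"
    by (intro monotone_onI) (auto simp: divide_simps algebra_simps)
  show "\<exists>z::complex. norm z = t \<and> (2 + 2 * z) / (2 + z) = of_real ((2 - 2 * t) / (2 - t))"
    if "0 \<le> t" for t :: real
    using that by (intro exI[of _ "- of_real t"]) auto
qed auto

lemma eq_half_iff_numerator_eq_0:
  fixes m p d :: real
  assumes "m - 1/2 = p / d" and "0 < d"
  shows "m = 1/2 \<longleftrightarrow> p = 0"
proof -
  have "p = (m - 1/2) * d" using assms by (simp add: field_simps)
  then show ?thesis using assms(2) by auto
qed

lemma margin_denominators_pos:
  fixes t :: real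
  assumes "0 < t" "t \<le> 2/5"
  shows "0 < 1 - t^2" "0 < 1 + t" "0 < 1 - t" "0 < 2 - t" "0 < 1 + t^2"
proof -
  have "t^2 < 1" using assms by (simp add: abs_square_less_1)
  then show "0 < 1 - t^2" by simp
  show "0 < 1 + t" "0 < 1 - t" "0 < 2 - t" using assms by auto
  show "0 < 1 + t^2" by (simp add: add_pos_nonneg)
qed

lemma margins_identity:
  fixes t :: real
  assumes "0 < t" "t \<le> 2/5"
  shows "1 - 2 * t / (1 - t^2) - 2 * t / (1 - t^2) = 1/2 \<longleftrightarrow> 1 - 8 * t - t^2 = 0"
    and "1 - 2 * t / (1 - t^2) - t / (1 - t) = 1/2 \<longleftrightarrow> 1 - 6 * t - 3 * t^2 = 0"
    and "1 - 2 * t / (1 - t^2) = 1/2 \<longleftrightarrow> 1 - 4 * t - t^2 = 0"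
  using margin_denominators_pos[OF assms]
  by (intro eq_half_iff_numerator_eq_0[where d = "2 * (1 - t^2)"];
      simp add: divide_simps; simp add: algebra_simps power2_eq_square)+

lemma margins_z_div_one_plus_z:
  fixes t :: real
  assumes "0 < t" "t \<le> 2/5"
  shows "1 / (1 + t) - 2 * t / (1 - t^2) - 2 * t / (1 - t^2) = 1/2 \<longleftrightarrow> t^2 - 10 * t + 1 = 0"
    and "1 / (1 + t) - 2 * t / (1 - t^2) - t / (1 - t) = 1/2 \<longleftrightarrow> 1 - 8 * t - t^2 = 0"
    and "1 / (1 + t) - 2 * t / (1 - t^2) = 1/2 \<longleftrightarrow> t^2 - 6 * t + 1 = 0"
  using margin_denominators_pos[OF assms]
  by (intro eq_half_iff_numerator_eq_0[where d = "2 * (1 - t^2)"];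
      simp add: divide_simps; simp add: algebra_simps power2_eq_square)+

lemma margins_z_div_one_minus_z_sq:
  fixes t :: real
  assumes "0 < t" "t \<le> 2/5"
  shows "(1 - t^2) / (1 + t^2) - 2 * t / (1 - t^2) - 2 * t / (1 - t^2) = 1/2
           \<longleftrightarrow> 3 * t^4 - 8 * t^3 - 4 * t^2 - 8 * t + 1 = 0"
    and "(1 - t^2) / (1 + t^2) - 2 * t / (1 - t^2) - t / (1 - t) = 1/2
           \<longleftrightarrow> t^4 - 6 * t^3 - 6 * t^2 - 6 * t + 1 = 0"
    and "(1 - t^2) / (1 + t^2) - 2 * t / (1 - t^2) = 1/2
           \<longleftrightarrow> 3 * t^4 - 4 * t^3 - 4 * t^2 - 4 * t + 1 = 0"
  using margin_denominators_pos[OF assms]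
  by (intro eq_half_iff_numerator_eq_0[where d = "2 * (1 + t^2) * (1 - t^2)"];
      simp add: divide_simps; simp add: algebra_simps eval_nat_numeral)+

lemma margins_Koebe:
  fixes t :: real
  assumes "0 < t" "t \<le> 2/5"
  shows "(1 - t) / (1 + t) - 2 * t / (1 - t^2) - 2 * t / (1 - t^2) = 1/2 \<longleftrightarrow> 3 * t^2 - 12 * t + 1 = 0"
    and "(1 - t) / (1 + t) - 2 * t / (1 - t^2) - t / (1 - t) = 1/2 \<longleftrightarrow> t^2 - 10 * t + 1 = 0"
    and "(1 - t) / (1 + t) - 2 * t / (1 - t^2) = 1/2 \<longleftrightarrow> 3 * t^2 - 8 * t + 1 = 0"
  using margin_denominators_pos[OF assms]
  by (intro eq_half_iff_numerator_eq_0[where d = "2 * (1 - t^2)"];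
      simp add: divide_simps; simp add: algebra_simps power2_eq_square)+

lemma margins_z_plus_half_z_sq:
  fixes t :: real
  assumes "0 < t" "t \<le> 2/5"
  shows "(2 - 2 * t) / (2 - t) - 2 * t / (1 - t^2) - 2 * t / (1 - t^2) = 1/2
           \<longleftrightarrow> 3 * t^3 + 6 * t^2 - 19 * t + 2 = 0"
    and "(2 - 2 * t) / (2 - t) - 2 * t / (1 - t^2) - t / (1 - t) = 1/2
           \<longleftrightarrow> 5 * t^3 - 15 * t + 2 = 0"
    and "(2 - 2 * t) / (2 - t) - 2 * t / (1 - t^2) = 1/2
           \<longleftrightarrow> 3 * t^3 + 2 * t^2 - 11 * t + 2 = 0"
  using margin_denominators_pos[OF assms]
  by (intro eq_half_iff_numerator_eq_0[where d = "2 * (2 - t) * (1 - t^2)"];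
      simp add: divide_simps; simp add: algebra_simps eval_nat_numeral)+

lemma car_radii_identity:
  "car_radius (F1 (\<lambda>z. z)) = 1 / (4 + sqrt 17)"
  "car_radius (F2 (\<lambda>z. z)) = 1 / (3 + 2 * sqrt 3)"
  "car_radius (F3 (\<lambda>z. z)) = 1 / (2 + sqrt 5)"
proof -
  interpret logderiv_kernel "\<lambda>z. z" "\<lambda>_. 1" "2/5" by (rule logderiv_kernel_identity)
  have "4 < sqrt 17" "3/2 < sqrt 3" "2 < sqrt 5"
    by (rule real_less_rsqrt; simp add: power2_eq_square)+
  moreover have "sqrt 17 \<le> 22/5" "sqrt 3 \<le> 2" "sqrt 5 \<le> 12/5"
    by (rule real_le_lsqrt; simp add: power2_eq_square)+
  moreover have "1 / (4 + sqrt 17) = sqrt 17 - 4" "1 / (3 + 2 * sqrt 3) = (2 * sqrt 3 - 3) / 3"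
    "1 / (2 + sqrt 5) = sqrt 5 - 2"
    using calculation by (simp_all add: field_simps algebra_simps)
  ultimately show "car_radius (F1 (\<lambda>z. z)) = 1 / (4 + sqrt 17)"
    and "car_radius (F2 (\<lambda>z. z)) = 1 / (3 + 2 * sqrt 3)"
    and "car_radius (F3 (\<lambda>z. z)) = 1 / (2 + sqrt 5)"
    by (simp_all only:)
       (intro car_radius_F1_eqI[OF margins_identity(1)] car_radius_F2_eqI[OF margins_identity(2)]
          car_radius_F3_eqI[OF margins_identity(3)]; simp add: power2_eq_square field_simps)+
qed

lemma car_radii_z_div_one_plus_z:
  "car_radius (F1 (\<lambda>z. z / (1 + z))) = 5 - 2 * sqrt 6"
  "car_radius (F2 (\<lambda>z. z / (1 + z))) = sqrt 17 - 4"
  "car_radius (F3 (\<lambda>z. z / (1 + z))) = 3 - 2 * sqrt 2"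
proof -
  interpret logderiv_kernel "\<lambda>z. z / (1 + z)" "\<lambda>t. 1 / (1 + t)" "2/5"
    by (rule logderiv_kernel_z_div_one_plus_z)
  have "23/10 \<le> sqrt 6" "4 < sqrt 17" "13/10 \<le> sqrt 2"
    by (rule real_le_rsqrt real_less_rsqrt; simp add: power2_eq_square)+
  moreover have "sqrt 6 < 5/2" "sqrt 17 \<le> 22/5" "sqrt 2 < 3/2"
    by (rule real_less_lsqrt real_le_lsqrt; simp add: power2_eq_square)+
  ultimately show "car_radius (F1 (\<lambda>z. z / (1 + z))) = 5 - 2 * sqrt 6"
    and "car_radius (F2 (\<lambda>z. z / (1 + z))) = sqrt 17 - 4"
    and "car_radius (F3 (\<lambda>z. z / (1 + z))) = 3 - 2 * sqrt 2"
    by (intro car_radius_F1_eqI[OF margins_z_div_one_plus_z(1)]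
          car_radius_F2_eqI[OF margins_z_div_one_plus_z(2)]
          car_radius_F3_eqI[OF margins_z_div_one_plus_z(3)];
        simp add: power2_eq_square algebra_simps)+
qed

lemma car_radii_z_div_one_minus_z_sq:
  "least_root_in_unit_interval (\<lambda>r. 3*r^4 - 8*r^3 - 4*r^2 - 8*r + 1) (car_radius (F1 (\<lambda>z. z / (1 - z^2))))"
  "least_root_in_unit_interval (\<lambda>r. r^4 - 6*r^3 - 6*r^2 - 6*r + 1) (car_radius (F2 (\<lambda>z. z / (1 - z^2))))"
  "least_root_in_unit_interval (\<lambda>r. 3*r^4 - 4*r^3 - 4*r^2 - 4*r + 1) (car_radius (F3 (\<lambda>z. z / (1 - z^2))))"
proof -
  interpret logderiv_kernel "\<lambda>z. z / (1 - z^2)" "\<lambda>t. (1 - t^2) / (1 + t^2)" "2/5"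
    by (rule logderiv_kernel_z_div_one_minus_z_sq)
  show "least_root_in_unit_interval (\<lambda>r. 3*r^4 - 8*r^3 - 4*r^2 - 8*r + 1) (car_radius (F1 (\<lambda>z. z / (1 - z^2))))"
    by (rule car_radius_F1_least_root[OF margins_z_div_one_minus_z_sq(1), where c = "1/4"])
       (auto intro!: continuous_intros simp: power_divide)
  show "least_root_in_unit_interval (\<lambda>r. r^4 - 6*r^3 - 6*r^2 - 6*r + 1) (car_radius (F2 (\<lambda>z. z / (1 - z^2))))"
    by (rule car_radius_F2_least_root[OF margins_z_div_one_minus_z_sq(2), where c = "1/4"])
       (auto intro!: continuous_intros simp: power_divide)
  show "least_root_in_unit_interval (\<lambda>r. 3*r^4 - 4*r^3 - 4*r^2 - 4*r + 1) (car_radius (F3 (\<lambda>z. z / (1 - z^2))))"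
    by (rule car_radius_F3_least_root[OF margins_z_div_one_minus_z_sq(3), where c = "1/4"])
       (auto intro!: continuous_intros simp: power_divide)
qed

lemma car_radii_Koebe:
  "car_radius (F1 (\<lambda>z. z / (1 - z)^2)) = (6 - sqrt 33) / 3"
  "car_radius (F2 (\<lambda>z. z / (1 - z)^2)) = 5 - 2 * sqrt 6"
  "car_radius (F3 (\<lambda>z. z / (1 - z)^2)) = (4 - sqrt 13) / 3"
proof -
  interpret logderiv_kernel "\<lambda>z. z / (1 - z)^2" "\<lambda>t. (1 - t) / (1 + t)" "2/5"
    by (rule logderiv_kernel_Koebe)
  have "24/5 \<le> sqrt 33" "23/10 \<le> sqrt 6" "14/5 \<le> sqrt 13"
    by (rule real_le_rsqrt; simp add: power2_eq_square)+
  moreover have "sqrt 33 < 6" "sqrt 6 < 5/2" "sqrt 13 < 4"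
    by (rule real_less_lsqrt; simp add: power2_eq_square)+
  ultimately show "car_radius (F1 (\<lambda>z. z / (1 - z)^2)) = (6 - sqrt 33) / 3"
    and "car_radius (F2 (\<lambda>z. z / (1 - z)^2)) = 5 - 2 * sqrt 6"
    and "car_radius (F3 (\<lambda>z. z / (1 - z)^2)) = (4 - sqrt 13) / 3"
    by (intro car_radius_F1_eqI[OF margins_Koebe(1)] car_radius_F2_eqI[OF margins_Koebe(2)]
          car_radius_F3_eqI[OF margins_Koebe(3)]; simp add: power2_eq_square field_simps)+
qed

lemma car_radii_z_plus_half_z_sq:
  "least_root_in_unit_interval (\<lambda>r. 3*r^3 + 6*r^2 - 19*r + 2) (car_radius (F1 (\<lambda>z. z + z^2 / 2)))"
  "least_root_in_unit_interval (\<lambda>r. 5*r^3 - 15*r + 2) (car_radius (F2 (\<lambda>z. z + z^2 / 2)))"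
  "least_root_in_unit_interval (\<lambda>r. 3*r^3 + 2*r^2 - 11*r + 2) (car_radius (F3 (\<lambda>z. z + z^2 / 2)))"
proof -
  interpret logderiv_kernel "\<lambda>z. z + z^2 / 2" "\<lambda>t. (2 - 2 * t) / (2 - t)" "2/5"
    by (rule logderiv_kernel_z_plus_half_z_sq)
  show "least_root_in_unit_interval (\<lambda>r. 3*r^3 + 6*r^2 - 19*r + 2) (car_radius (F1 (\<lambda>z. z + z^2 / 2)))"
    by (rule car_radius_F1_least_root[OF margins_z_plus_half_z_sq(1), where c = "1/4"])
       (auto intro!: continuous_intros simp: power_divide)
  show "least_root_in_unit_interval (\<lambda>r. 5*r^3 - 15*r + 2) (car_radius (F2 (\<lambda>z. z + z^2 / 2)))"
    by (rule car_radius_F2_least_root[OF margins_z_plus_half_z_sq(2), where c = "1/4"])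
       (auto intro!: continuous_intros simp: power_divide)
  show "least_root_in_unit_interval (\<lambda>r. 3*r^3 + 2*r^2 - 11*r + 2) (car_radius (F3 (\<lambda>z. z + z^2 / 2)))"
    by (rule car_radius_F3_least_root[OF margins_z_plus_half_z_sq(3), where c = "1/4"])
       (auto intro!: continuous_intros simp: power_divide)
qed

theorem theorem6p1:
  shows
  "(car_radius (F1 (\<lambda>z. z)) = 1 / (4 + sqrt 17) \<and>
    car_radius (F2 (\<lambda>z. z)) = 1 / (3 + 2 * sqrt 3) \<and>
    car_radius (F3 (\<lambda>z. z)) = 1 / (2 + sqrt 5))
 \<and> (car_radius (F1 (\<lambda>z. z / (1 + z))) = 5 - 2 * sqrt 6 \<and>
    car_radius (F2 (\<lambda>z. z / (1 + z))) = sqrt 17 - 4 \<and>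
    car_radius (F3 (\<lambda>z. z / (1 + z))) = 3 - 2 * sqrt 2)
 \<and> (let R1 = car_radius (F1 (\<lambda>z. z / (1 - z^2)));
        R2 = car_radius (F2 (\<lambda>z. z / (1 - z^2)));
        R3 = car_radius (F3 (\<lambda>z. z / (1 - z^2)));
        p1 = (\<lambda>r::real. 3*r^4 - 8*r^3 - 4*r^2 - 8*r + 1);
        p2 = (\<lambda>r::real. r^4 - 6*r^3 - 6*r^2 - 6*r + 1);
        p3 = (\<lambda>r::real. 3*r^4 - 4*r^3 - 4*r^2 - 4*r + 1)
    in (0 < R1 \<and> R1 < 1 \<and> p1 R1 = 0 \<and> (\<forall>s. 0 < s \<and> s < R1 \<longrightarrow> p1 s \<noteq> 0)) \<and>
       (0 < R2 \<and> R2 < 1 \<and> p2 R2 = 0 \<and> (\<forall>s. 0 < s \<and> s < R2 \<longrightarrow> p2 s \<noteq> 0)) \<and>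
       (0 < R3 \<and> R3 < 1 \<and> p3 R3 = 0 \<and> (\<forall>s. 0 < s \<and> s < R3 \<longrightarrow> p3 s \<noteq> 0)))
 \<and> (car_radius (F1 (\<lambda>z. z / (1 - z)^2)) = (6 - sqrt 33) / 3 \<and>
    car_radius (F2 (\<lambda>z. z / (1 - z)^2)) = 5 - 2 * sqrt 6 \<and>
    car_radius (F3 (\<lambda>z. z / (1 - z)^2)) = (4 - sqrt 13) / 3)
 \<and> (let S1 = car_radius (F1 (\<lambda>z. z + z^2 / 2));
        S2 = car_radius (F2 (\<lambda>z. z + z^2 / 2));
        S3 = car_radius (F3 (\<lambda>z. z + z^2 / 2));
        q1 = (\<lambda>r::real. 3*r^3 + 6*r^2 - 19*r + 2);
        q2 = (\<lambda>r::real. 5*r^3 - 15*r + 2);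
        q3 = (\<lambda>r::real. 3*r^3 + 2*r^2 - 11*r + 2)
    in (0 < S1 \<and> S1 < 1 \<and> q1 S1 = 0 \<and> (\<forall>s. 0 < s \<and> s < S1 \<longrightarrow> q1 s \<noteq> 0)) \<and>
       (0 < S2 \<and> S2 < 1 \<and> q2 S2 = 0 \<and> (\<forall>s. 0 < s \<and> s < S2 \<longrightarrow> q2 s \<noteq> 0)) \<and>
       (0 < S3 \<and> S3 < 1 \<and> q3 S3 = 0 \<and> (\<forall>s. 0 < s \<and> s < S3 \<longrightarrow> q3 s \<noteq> 0)))"
  using car_radii_identity car_radii_z_div_one_plus_z car_radii_z_div_one_minus_z_sq
    car_radii_Koebe car_radii_z_plus_half_z_sq
  unfolding least_root_in_unit_interval_def Let_def by simp

end
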